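(* Let $\omega\in\mathbb{R}$ and let $u\in W(\mathbb{R}^+)\cap C^2(\mathbb{R}^+)$ be a non-trivial classical solution of $-\partial_x^2u+\omega u-u\log|u|^2=0$ on $\mathbb{R}^+=(0,\infty)$. Then there exist $\theta\in\mathbb{R}$ and $c\in\mathbb{R}$ such that $u(x)=e^{i\theta}e^{\frac{\omega+1}{2}}e^{-\frac12(x+c)^2}$ for all $x\in\mathbb{R}^+$.
   Context: $W(\mathbb{R}^+)=\{u\in H^1(\mathbb{R}^+;\mathbb{C}):|u|^2\log|u|^2\in L^1(\mathbb{R}^+)\}$. *)

theory Defs
  imports "HOL-Analysis.Analysis"
begin

definition L2_pos :: "(real \<Rightarrow> complex) \<Rightarrow> bool" where
  "L2_pos f \<longleftrightarrow> set_borel_measurable lborel {0<..} f \<and>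
     set_integrable lborel {0<..} (\<lambda>x. (cmod (f x))\<^sup>2)"

definition test_fun_pos :: "(real \<Rightarrow> real) \<Rightarrow> bool" where
  "test_fun_pos \<phi> \<longleftrightarrow> (\<forall>n. ((deriv ^^ n) \<phi>) differentiable_on UNIV) \<and>
     (\<exists>a b. 0 < a \<and> a < b \<and> (\<forall>x. x \<notin> {a..b} \<longrightarrow> \<phi> x = 0))"

definition H1_pos :: "(real \<Rightarrow> complex) \<Rightarrow> bool" where
  "H1_pos u \<longleftrightarrow> L2_pos u \<and>
     (\<exists>g. L2_pos g \<and> (\<forall>\<phi>. test_fun_pos \<phi> \<longrightarrow>
        (LINT x:{0<..}|lborel. u x * complex_of_real (deriv \<phi> x)) =
        - (LINT x:{0<..}|lborel. g x * complex_of_real (\<phi> x))))"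

text \<open>W(R+) = {u in H^1 : |u|^2 log |u|^2 in L^1}; note ln 0 = 0 in Isabelle, matching 0 log 0 = 0.\<close>
definition W_pos :: "(real \<Rightarrow> complex) \<Rightarrow> bool" where
  "W_pos u \<longleftrightarrow> H1_pos u \<and>
     set_integrable lborel {0<..} (\<lambda>x. (cmod (u x))\<^sup>2 * ln ((cmod (u x))\<^sup>2))"

definition C2_on :: "real set \<Rightarrow> (real \<Rightarrow> complex) \<Rightarrow> bool" where
  "C2_on S u \<longleftrightarrow> (\<forall>x\<in>S. u differentiable at x) \<and>
     (\<forall>x\<in>S. (\<lambda>t. vector_derivative u (at t)) differentiable at x) \<and>
     continuous_on S (\<lambda>t. vector_derivative (\<lambda>s. vector_derivative u (at s)) (at t))"

end

theory Submission
  imports Defs "HOL-Real_Asymp.Real_Asymp"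
begin

text \<open>Write \<open>u = a + i b\<close>. The equation is Newton's law in the plane with a radial force, so the
  angular momentum \<open>a b' - b a'\<close> and the energy \<open>|u'|\<^sup>2 - F(|u|\<^sup>2)\<close>, \<open>F(t) = (\<omega> + 1) t - t ln t\<close>,
  are conserved. Energy conservation bounds \<open>|u|\<close> and \<open>|u'|\<close>, so \<open>\<rho> = |u|\<^sup>2\<close> has bounded derivative
  and, being integrable, tends to 0; consequently both conserved quantities vanish. Then
  \<open>\<rho>'\<^sup>2 = 4 \<rho> |u'|\<^sup>2 = 4 \<rho> F(\<rho>)\<close>, which gives \<open>(\<rho>'/\<rho>)' = -2\<close> wherever \<open>\<rho> > 0\<close>: \<open>ln \<rho>\<close> is a
  concave parabola on every zero-free interval, so \<open>u\<close> has no zeros at all, and the vanishing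
  angular momentum turns \<open>u' = (\<rho>'/2\<rho>) u = -(x + c) u\<close> into the Gaussian profile.\<close>

lemma increment_ge_of_deriv_ge:
  fixes f f' :: "real \<Rightarrow> real"
  assumes "x \<le> y"
    and "\<And>t. x \<le> t \<Longrightarrow> t \<le> y \<Longrightarrow> (f has_real_derivative f' t) (at t)"
    and "\<And>t. x \<le> t \<Longrightarrow> t \<le> y \<Longrightarrow> m \<le> f' t"
  shows "m * (y - x) \<le> f y - f x"
proof -
  have "f x - m * x \<le> f y - m * y"
  proof (rule DERIV_nonneg_imp_nondecreasing[OF assms(1)])
    fix t assume "x \<le> t" "t \<le> y"
    then show "\<exists>d. ((\<lambda>t. f t - m * t) has_real_derivative d) (at t) \<and> 0 \<le> d"
      using assms(2,3) by (intro exI conjI derivative_eq_intros) auto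
  qed
  then show ?thesis by (simp add: algebra_simps)
qed

lemma bounded_deriv_tendsto_imp_0:
  fixes f f' :: "real \<Rightarrow> real"
  assumes "\<And>x. x > a \<Longrightarrow> (f has_real_derivative f' x) (at x)"
    and "\<And>x. x > a \<Longrightarrow> \<bar>f x\<bar> \<le> B"
    and "(f' \<longlongrightarrow> L) at_top"
  shows "L = 0"
proof -
  have "L \<le> 0"
    if deriv: "\<And>x. x > a \<Longrightarrow> (g has_real_derivative g' x) (at x)"
      and bound: "\<And>x. x > a \<Longrightarrow> \<bar>g x\<bar> \<le> B"
      and lim: "(g' \<longlongrightarrow> L) at_top" for g g' L
  proof (rule ccontr)
    assume "\<not> L \<le> 0"
    then have "L / 2 < L" by simp
    from order_tendstoD(1)[OF lim this]
    obtain X where X: "\<And>x. x \<ge> X \<Longrightarrow> L / 2 < g' x"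
      by (auto simp: eventually_at_top_linorder)
    define x where "x = max X (a + 1)"
    define T where "T = 4 * (\<bar>B\<bar> + 1) / L"
    have "T > 0" using \<open>\<not> L \<le> 0\<close> by (simp add: T_def)
    have "L / 2 * (x + T - x) \<le> g (x + T) - g x"
      using \<open>\<not> L \<le> 0\<close> X
    by (intro increment_ge_of_deriv_ge[where f' = g'] deriv) (auto simp: x_def T_def less_imp_le)
    moreover have "L / 2 * T = 2 * (\<bar>B\<bar> + 1)"
      using \<open>\<not> L \<le> 0\<close> by (simp add: T_def)
    moreover have "\<bar>g x\<bar> \<le> B" "\<bar>g (x + T)\<bar> \<le> B"
      using \<open>T > 0\<close> by (auto intro!: bound simp: x_def)
    ultimately show False by simp
  qed
  from this[OF assms] this[of "\<lambda>x. - f x" "\<lambda>x. - f' x" "- L"] assms show ?thesis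
    by (auto intro: DERIV_minus tendsto_minus)
qed

lemma exp_solution_of_linear_ode:
  fixes f \<phi> \<phi>' :: "real \<Rightarrow> real"
  assumes "convex S"
    and "\<And>x. x \<in> S \<Longrightarrow> (f has_real_derivative \<phi>' x * f x) (at x)"
    and "\<And>x. x \<in> S \<Longrightarrow> (\<phi> has_real_derivative \<phi>' x) (at x)"
  shows "\<exists>A. \<forall>x\<in>S. f x = A * exp (\<phi> x)"
proof -
  have "\<exists>A. \<forall>x\<in>S. f x * exp (- \<phi> x) = A"
  proof (rule has_field_derivative_zero_constant[OF assms(1)])
    fix x assume "x \<in> S"
    have "((\<lambda>x. f x * exp (- \<phi> x)) has_real_derivative 0) (at x)"
      using assms(2,3)[OF \<open>x \<in> S\<close>] by (auto intro!: derivative_eq_intros)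
    then show "((\<lambda>x. f x * exp (- \<phi> x)) has_real_derivative 0) (at x within S)"
      by (rule has_field_derivative_at_within)
  qed
  then show ?thesis by (metis exp_minus_inverse mult.assoc mult.right_neutral)
qed

lemma deriv_0_on_pos_imp_eq_at_1:
  assumes "\<And>x. x > 0 \<Longrightarrow> (f has_real_derivative 0) (at x)" "x > 0"
  shows "f x = f 1"
proof -
  have "\<exists>c. \<forall>y\<in>{0<..}. f y = c"
  proof (rule has_field_derivative_zero_constant)
    show "(f has_real_derivative 0) (at y within {0<..})" if "y \<in> {0<..}" for y
      using assms(1) that by (simp add: has_field_derivative_at_within)
  qed simp
  then show ?thesis using assms(2) by fastforce
qed

lemma exists_nearest_zero:
  fixes f :: "real \<Rightarrow> real"
  assumes "continuous_on (closed_segment x z) f" "f z = 0"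
  obtains b where "b \<in> closed_segment x z" "f b = 0" "\<And>y. y \<in> open_segment x b \<Longrightarrow> f y \<noteq> 0"
proof -
  let ?Z = "{y \<in> closed_segment x z. f y = 0}"
  have "closed ?Z"
    using assms(1) by (intro continuous_closed_preimage_constant) auto
  moreover have "?Z \<noteq> {}" using assms(2) by auto
  ultimately obtain b where b: "b \<in> ?Z" "\<And>y. y \<in> ?Z \<Longrightarrow> dist x b \<le> dist x y"
    using distance_attains_inf[of ?Z x] by blast
  have "f y \<noteq> 0" if "y \<in> open_segment x b" for y
  proof
    assume "f y = 0"
    have "closed_segment x b \<subseteq> closed_segment x z"
      using b(1) by (simp add: subset_closed_segment)
    then have "y \<in> ?Z" using that \<open>f y = 0\<close> open_closed_segment by auto
    then have "dist x b \<le> dist x y" by (rule b(2))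
    moreover have "dist y x < dist x b" using dist_in_open_segment[OF that] by blast
    ultimately show False by (simp add: dist_commute)
  qed
  with b(1) that show ?thesis by blast
qed

lemma abs_mult_ln_le_powr:
  fixes t :: real
  assumes "0 \<le> t" "t \<le> 1"
  shows "\<bar>t * ln t\<bar> \<le> 4 * t powr (3/4)"
proof (cases "t = 0")
  case False
  then have "t > 0" using assms(1) by simp
  have "ln (t powr (-1/4)) \<le> t powr (-1/4) - 1"
    using \<open>t > 0\<close> by (intro ln_le_minus_one) simp
  then have "- ln t \<le> 4 * t powr (-1/4)"
    using \<open>t > 0\<close> by (simp add: ln_powr)
  then have "t * (- ln t) \<le> t * (4 * t powr (-1/4))"
    using \<open>t > 0\<close> by (intro mult_left_mono) auto
  also have "\<dots> = 4 * t powr (3/4)"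
    using \<open>t > 0\<close> by (simp add: powr_add[symmetric] powr_mult_base)
  finally have "- (t * ln t) \<le> 4 * t powr (3/4)" by simp
  moreover have "t * ln t \<le> 0"
    using \<open>t > 0\<close> assms(2) by (simp add: mult_nonneg_nonpos)
  ultimately show ?thesis by linarith
qed simp

lemma tendsto_mult_ln_0:
  fixes f :: "'a \<Rightarrow> real"
  assumes "(f \<longlongrightarrow> 0) F" "\<forall>\<^sub>F x in F. 0 \<le> f x"
  shows "((\<lambda>x. f x * ln (f x)) \<longlongrightarrow> 0) F"
proof (rule Lim_null_comparison)
  have "\<forall>\<^sub>F x in F. f x < 1" using order_tendstoD(2)[OF assms(1)] by simp
  with assms(2) show "\<forall>\<^sub>F x in F. norm (f x * ln (f x)) \<le> 4 * f x powr (3/4)"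
    by eventually_elim (simp add: abs_mult_ln_le_powr)
  show "((\<lambda>x. 4 * f x powr (3/4)) \<longlongrightarrow> 0) F"
    using tendsto_mult_right_zero[OF tendsto_zero_powrI[OF assms(1) tendsto_const assms(2)]]
    by simp
qed

lemma eventually_power2_le_of_deriv:
  fixes g :: "real \<Rightarrow> real"
  assumes "(g has_real_derivative d) (at x)" "g x = 0"
  shows "\<forall>\<^sub>F y in at x. g y ^ 2 \<le> (\<bar>d\<bar> + 1)^2 * (y - x)^2"
proof -
  have "((\<lambda>y. (g y - g x) / (y - x)) \<longlongrightarrow> d) (at x)"
    using assms(1) has_field_derivative_iff by blast
  then have "\<forall>\<^sub>F y in at x. dist ((g y - g x) / (y - x)) d < 1"
    by (rule tendstoD) simp
  then show ?thesis using eventually_neq_at_within[of x x UNIV]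
  proof eventually_elim
    case (elim y)
    then have "\<bar>g y / (y - x) - d\<bar> < 1" using assms(2) by (simp add: dist_real_def)
    then have "\<bar>g y / (y - x)\<bar> \<le> \<bar>d\<bar> + 1" by linarith
    then have "\<bar>g y\<bar> \<le> (\<bar>d\<bar> + 1) * \<bar>y - x\<bar>" using elim(2)
      by (simp add: abs_divide divide_le_eq)
    then have "\<bar>g y\<bar>^2 \<le> ((\<bar>d\<bar> + 1) * \<bar>y - x\<bar>)^2" by (intro power_mono) auto
    then show ?case by (simp add: power_mult_distrib)
  qed
qed

text \<open>\<open>t \<mapsto> t ln t\<close> is not differentiable at 0, but a quadratic bound on \<open>f\<close> near a zero gives
  \<open>|f ln f| = O(|y - x|\<^sup>3\<^sup>/\<^sup>2)\<close> there.\<close>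
lemma mult_ln_has_real_derivative_0:
  fixes f :: "real \<Rightarrow> real"
  assumes "f x = 0" "\<And>y. 0 \<le> f y" "K > 0"
    and "\<forall>\<^sub>F y in at x. f y \<le> K * (y - x)^2"
  shows "((\<lambda>y. f y * ln (f y)) has_real_derivative 0) (at x)"
proof -
  have "((\<lambda>y. K * (y - x)^2) \<longlongrightarrow> 0) (at x)"
    by (auto intro!: tendsto_eq_intros)
  then have small: "\<forall>\<^sub>F y in at x. K * (y - x)^2 < 1"
    by (rule order_tendstoD) simp
  have "((\<lambda>y. 4 * ((K * (y - x)^2) powr (3/4) / \<bar>y - x\<bar>)) \<longlongrightarrow> 4 * 0) (at x)"
    by (intro tendsto_mult tendsto_const) (use \<open>K > 0\<close> in real_asymp)
  then have bound: "((\<lambda>y. 4 * ((K * (y - x)^2) powr (3/4) / \<bar>y - x\<bar>)) \<longlongrightarrow> 0) (at x)"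
    by simp
  have "((\<lambda>y. (f y * ln (f y) - f x * ln (f x)) / (y - x)) \<longlongrightarrow> 0) (at x)"
  proof (rule Lim_null_comparison[OF _ bound])
    show "\<forall>\<^sub>F y in at x. norm ((f y * ln (f y) - f x * ln (f x)) / (y - x))
        \<le> 4 * ((K * (y - x)^2) powr (3/4) / \<bar>y - x\<bar>)"
      using assms(4) small
    proof eventually_elim
      case (elim y)
      have "\<bar>f y * ln (f y)\<bar> \<le> 4 * f y powr (3/4)"
        using elim assms(2)[of y] by (intro abs_mult_ln_le_powr) auto
      also have "\<dots> \<le> 4 * (K * (y - x)^2) powr (3/4)"
        using elim(1) assms(2)[of y] by (auto intro!: powr_mono2)
      finally have "\<bar>f y * ln (f y)\<bar> / \<bar>y - x\<bar> \<le> 4 * (K * (y - x)^2) powr (3/4) / \<bar>y - x\<bar>"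
        by (intro divide_right_mono) auto
      then show ?case
        using assms(1) by simp
    qed
  qed
  then show ?thesis using has_field_derivative_iff by blast
qed

lemma integral_window_tendsto_0:
  fixes f :: "real \<Rightarrow> real"
  assumes int: "set_integrable lborel {c..} f" and cont: "continuous_on {c..} f" and "h \<ge> 0"
  shows "((\<lambda>x. integral {x..x + h} f) \<longlongrightarrow> 0) at_top"
proof -
  define I where "I b = integral {c..b} f" for b
  have "\<forall>\<^sub>F b in at_top. set_lebesgue_integral lborel {c..b} f = I b"
    using eventually_ge_at_top[of c]
  proof eventually_elim
    case (elim b)
    have "set_integrable lborel {c..b} f"
      by (rule set_integrable_subset[OF int]) auto
    then show ?case unfolding I_def by (rule set_borel_integral_eq_integral(2))
  qed
  from tendsto_cong[OF this] tendsto_set_lebesgue_integral_at_top[OF _ int]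
  have lim: "(I \<longlongrightarrow> set_lebesgue_integral lborel {c..} f) at_top" by simp
  have "filterlim (\<lambda>x. x + h) at_top at_top" by real_asymp
  from tendsto_diff[OF filterlim_compose[OF lim this] lim]
  have "((\<lambda>x. I (x + h) - I x) \<longlongrightarrow> 0) at_top" by simp
  moreover have "\<forall>\<^sub>F x in at_top. I (x + h) - I x = integral {x..x + h} f"
    using eventually_ge_at_top[of c]
  proof eventually_elim
    case (elim x)
    have "I x + integral {x..x + h} f = I (x + h)"
      unfolding I_def using elim \<open>h \<ge> 0\<close>
      by (intro Henstock_Kurzweil_Integration.integral_combine integrable_continuous_real
          continuous_on_subset[OF cont]) auto
    then show ?case by simp
  qed
  ultimately show ?thesis using tendsto_cong by force
qed

text \<open>Where \<open>f \<ge> \<epsilon>\<close>, the lower bound on \<open>f'\<close> keeps \<open>f \<ge> \<epsilon>/2\<close> on a window of fixed length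
  behind it, whereas integrability makes the integrals over such windows tend to 0.\<close>
lemma integrable_deriv_lower_bound_tendsto_0:
  fixes f f' :: "real \<Rightarrow> real"
  assumes deriv: "\<And>x. x > a \<Longrightarrow> (f has_real_derivative f' x) (at x)"
    and lower: "\<And>x. x > a \<Longrightarrow> - K \<le> f' x"
    and nonneg: "\<And>x. x > a \<Longrightarrow> 0 \<le> f x"
    and int: "set_integrable lborel {a<..} f"
  shows "(f \<longlongrightarrow> 0) at_top"
proof (rule tendstoI)
  fix \<epsilon> :: real assume "\<epsilon> > 0"
  define M where "M = \<bar>K\<bar> + 1"
  define h where "h = \<epsilon> / (2 * M)"
  have "M > 0" by (simp add: M_def add_nonneg_pos)
  then have "h > 0" "M * h = \<epsilon> / 2"
    using \<open>\<epsilon> > 0\<close> by (auto simp: h_def)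
  have lower_M: "- M \<le> f' x" if "x > a" for x
    unfolding M_def using lower[OF that] abs_ge_self[of K] by linarith
  have cont: "continuous_on {a + 1..} f"
    by (intro continuous_at_imp_continuous_on ballI DERIV_isCont[OF deriv]) auto
  have "set_integrable lborel {a + 1..} f"
    by (rule set_integrable_subset[OF int]) auto
  from order_tendstoD(2)[OF integral_window_tendsto_0[OF this cont], of h "h * \<epsilon> / 2"]
  have "\<forall>\<^sub>F x in at_top. integral {x..x + h} f < h * \<epsilon> / 2"
    using \<open>h > 0\<close> \<open>\<epsilon> > 0\<close> by simp
  with eventually_ge_at_top[of "a + 1"] show "\<forall>\<^sub>F x in at_top. dist (f x) 0 < \<epsilon>"
  proof eventually_elim
    case (elim x)
    have "f x < \<epsilon>"
    proof (rule ccontr)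
      assume "\<not> f x < \<epsilon>"
      have "\<epsilon> / 2 \<le> f y" if "y \<in> {x..x + h}" for y
      proof -
        have "- M * (y - x) \<le> f y - f x"
          using that elim(1)
          by (intro increment_ge_of_deriv_ge[where f' = f'] deriv lower_M) auto
        moreover have "M * (y - x) \<le> M * h" using that \<open>M > 0\<close> by simp
        ultimately show ?thesis using \<open>\<not> f x < \<epsilon>\<close> \<open>M * h = \<epsilon> / 2\<close> by linarith
      qed
      then have "integral {x..x + h} (\<lambda>_. \<epsilon> / 2) \<le> integral {x..x + h} f"
        using elim(1)
        by (intro integral_le integrable_continuous_real continuous_on_subset[OF cont]) auto
      then show False using elim(2) \<open>h > 0\<close> by simp
    qed
    then show ?case using nonneg[of x] elim(1) by simp
  qed
qed

text \<open>A primitive of the nonlinearity \<open>t \<mapsto> \<omega> - ln t\<close>.\<close>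
definition log_potential :: "real \<Rightarrow> real \<Rightarrow> real" where
  "log_potential \<omega> t = (\<omega> + 1) * t - t * ln t"

lemma log_potential_le:
  assumes "0 \<le> t"
  shows "log_potential \<omega> t \<le> \<bar>\<omega> + 1\<bar> * t + 1"
proof -
  have "- (t * ln t) \<le> 1"
  proof (cases "t = 0")
    case False
    then have "t > 0" using assms by simp
    have "ln (1 / t) \<le> 1 / t - 1" using \<open>t > 0\<close> by (intro ln_le_minus_one) simp
    then have "t * (- ln t) \<le> t * (1 / t - 1)"
      using \<open>t > 0\<close> by (intro mult_left_mono) (auto simp: ln_div)
    also have "\<dots> = 1 - t" using \<open>t > 0\<close> by (simp add: field_simps)
    finally show ?thesis using \<open>t > 0\<close> by simp
  qed simp
  moreover have "(\<omega> + 1) * t \<le> \<bar>\<omega> + 1\<bar> * t" using assms by (intro mult_right_mono) auto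
  ultimately show ?thesis unfolding log_potential_def by linarith
qed

lemma le_of_log_potential_ge:
  assumes "- E \<le> log_potential \<omega> t"
  shows "t \<le> max (exp (\<omega> + 2)) (\<bar>E\<bar> + 1)"
proof (rule ccontr)
  assume "\<not> ?thesis"
  then have big: "exp (\<omega> + 2) < t" "\<bar>E\<bar> + 1 < t" by auto
  then have "t > 0" using exp_gt_zero less_trans by blast
  with big have "\<omega> + 1 - ln t < -1" using ln_less_cancel_iff[of "exp (\<omega> + 2)" t] by simp
  then have "t * (\<omega> + 1 - ln t) < t * (-1)" using \<open>t > 0\<close> by (intro mult_strict_left_mono)
  then have "log_potential \<omega> t < - t" by (simp add: log_potential_def algebra_simps)
  with assms big show False by linarith
qed

lemma tendsto_log_potential_0:
  assumes "(f \<longlongrightarrow> 0) F" "\<forall>\<^sub>F x in F. 0 \<le> f x"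
  shows "((\<lambda>x. log_potential \<omega> (f x)) \<longlongrightarrow> 0) F"
proof -
  have "((\<lambda>x. (\<omega> + 1) * f x - f x * ln (f x)) \<longlongrightarrow> (\<omega> + 1) * 0 - 0) F"
    by (intro tendsto_intros assms(1) tendsto_mult_ln_0[OF assms])
  then show ?thesis by (simp add: log_potential_def)
qed

text \<open>The equation \<open>u'' = (\<omega> - ln |u|\<^sup>2) u\<close> for \<open>u = a + i b\<close>, written as a real system.\<close>
locale log_nls_ode =
  fixes \<omega> :: real and a b a' b' :: "real \<Rightarrow> real"
  assumes a_deriv: "\<And>x. x > 0 \<Longrightarrow> (a has_real_derivative a' x) (at x)"
    and b_deriv: "\<And>x. x > 0 \<Longrightarrow> (b has_real_derivative b' x) (at x)"
    and a'_deriv: "\<And>x. x > 0 \<Longrightarrow> (a' has_real_derivative (\<omega> - ln (a x ^ 2 + b x ^ 2)) * a x) (at x)"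
    and b'_deriv: "\<And>x. x > 0 \<Longrightarrow> (b' has_real_derivative (\<omega> - ln (a x ^ 2 + b x ^ 2)) * b x) (at x)"
begin

text \<open>\<open>rho = |u|\<^sup>2\<close>, \<open>kin = |u'|\<^sup>2\<close> and \<open>mom = Im (conj u u')\<close>.\<close>
definition rho :: "real \<Rightarrow> real" where "rho x = a x ^ 2 + b x ^ 2"
definition rho' :: "real \<Rightarrow> real" where "rho' x = 2 * (a x * a' x + b x * b' x)"
definition kin :: "real \<Rightarrow> real" where "kin x = a' x ^ 2 + b' x ^ 2"
definition mom :: "real \<Rightarrow> real" where "mom x = a x * b' x - b x * a' x"
definition energy :: "real \<Rightarrow> real" where "energy x = kin x - log_potential \<omega> (rho x)"

lemma rho_nonneg: "0 \<le> rho x"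
  by (simp add: rho_def)

lemma kin_nonneg: "0 \<le> kin x"
  by (simp add: kin_def)

lemma rho_deriv: "x > 0 \<Longrightarrow> (rho has_real_derivative rho' x) (at x)"
  unfolding rho_def[abs_def] rho'_def
  by (auto intro!: derivative_eq_intros a_deriv b_deriv simp: algebra_simps)

lemma rho'_deriv:
  "x > 0 \<Longrightarrow> (rho' has_real_derivative 2 * kin x + 2 * (\<omega> - ln (rho x)) * rho x) (at x)"
  unfolding rho'_def[abs_def]
  by (rule derivative_eq_intros a_deriv b_deriv a'_deriv b'_deriv refl | assumption)+
    (simp add: kin_def rho_def algebra_simps power2_eq_square)

lemma kin_deriv: "x > 0 \<Longrightarrow> (kin has_real_derivative (\<omega> - ln (rho x)) * rho' x) (at x)"
  unfolding kin_def[abs_def]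
  by (rule derivative_eq_intros a_deriv b_deriv a'_deriv b'_deriv refl | assumption)+
    (simp add: rho'_def rho_def algebra_simps)

lemma mom_deriv: "x > 0 \<Longrightarrow> (mom has_real_derivative 0) (at x)"
  unfolding mom_def[abs_def]
  by (rule derivative_eq_intros a_deriv b_deriv a'_deriv b'_deriv refl | assumption)+
    (simp add: algebra_simps)

text \<open>At a zero of \<open>u\<close> the chain rule through \<open>ln\<close> is unavailable; there \<open>\<rho> = O((y - x)\<^sup>2)\<close>
  since \<open>a\<close> and \<open>b\<close> are differentiable.\<close>
lemma log_potential_rho_deriv:
  assumes "x > 0"
  shows "((\<lambda>y. log_potential \<omega> (rho y)) has_real_derivative (\<omega> - ln (rho x)) * rho' x) (at x)"
proof (cases "rho x = 0")
  case False
  then have "rho x > 0" using rho_nonneg[of x] by simp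
  have "((\<lambda>y. ln (rho y)) has_real_derivative inverse (rho x) * rho' x) (at x)"
    using DERIV_chain2[OF DERIV_ln[OF \<open>rho x > 0\<close>] rho_deriv[OF assms]] .
  then have "((\<lambda>y. (\<omega> + 1) * rho y - rho y * ln (rho y)) has_real_derivative
      (\<omega> + 1) * rho' x - (rho' x * ln (rho x) + inverse (rho x) * rho' x * rho x)) (at x)"
    by (intro DERIV_diff DERIV_cmult DERIV_mult rho_deriv assms)
  moreover have "(\<omega> + 1) * rho' x - (rho' x * ln (rho x) + inverse (rho x) * rho' x * rho x)
      = (\<omega> - ln (rho x)) * rho' x"
    using \<open>rho x > 0\<close> by (simp add: field_simps)
  ultimately show ?thesis by (simp add: log_potential_def)
next
  case True
  then have "a x = 0" "b x = 0" by (auto simp: rho_def add_nonneg_eq_0_iff)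
  then have "rho' x = 0" by (simp add: rho'_def)
  have "\<forall>\<^sub>F y in at x. rho y \<le> ((\<bar>a' x\<bar> + 1)^2 + (\<bar>b' x\<bar> + 1)^2) * (y - x)^2"
    using eventually_power2_le_of_deriv[OF a_deriv[OF assms] \<open>a x = 0\<close>]
      eventually_power2_le_of_deriv[OF b_deriv[OF assms] \<open>b x = 0\<close>]
    by eventually_elim (simp add: rho_def algebra_simps)
  then have "((\<lambda>y. rho y * ln (rho y)) has_real_derivative 0) (at x)"
    by (rule mult_ln_has_real_derivative_0[where f = rho, OF True rho_nonneg, rotated]) (simp add: add_pos_pos)
  then have "((\<lambda>y. (\<omega> + 1) * rho y - rho y * ln (rho y)) has_real_derivative (\<omega> + 1) * rho' x - 0) (at x)"
    by (intro DERIV_diff DERIV_cmult rho_deriv assms)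
  then show ?thesis by (simp add: log_potential_def \<open>rho' x = 0\<close>)
qed

lemma energy_deriv: "x > 0 \<Longrightarrow> (energy has_real_derivative 0) (at x)"
  unfolding energy_def[abs_def] using DERIV_diff[OF kin_deriv log_potential_rho_deriv] by simp

lemma mom_conserved: "x > 0 \<Longrightarrow> mom x = mom 1"
  by (rule deriv_0_on_pos_imp_eq_at_1[OF mom_deriv])

lemma kin_eq: "x > 0 \<Longrightarrow> kin x = energy 1 + log_potential \<omega> (rho x)"
  using deriv_0_on_pos_imp_eq_at_1[OF energy_deriv, of x] by (simp add: energy_def)

lemma mom_sq_add_rho'_sq: "mom x ^ 2 + (rho' x / 2) ^ 2 = rho x * kin x"
  unfolding mom_def rho'_def rho_def kin_def by algebra

lemma abs_rho'_le: "\<bar>rho' x\<bar> \<le> rho x + kin x"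
proof -
  have "(a x - a' x)^2 + (b x - b' x)^2 = rho x + kin x - rho' x"
    "(a x + a' x)^2 + (b x + b' x)^2 = rho x + kin x + rho' x"
    by (simp_all add: rho_def kin_def rho'_def power2_eq_square algebra_simps)
  moreover have "0 \<le> (a x - a' x)^2 + (b x - b' x)^2" "0 \<le> (a x + a' x)^2 + (b x + b' x)^2"
    by simp_all
  ultimately show ?thesis by linarith
qed

lemma rho_kin_bounded:
  obtains B where "\<And>x. x > 0 \<Longrightarrow> rho x \<le> B" "\<And>x. x > 0 \<Longrightarrow> kin x \<le> B"
proof -
  define R where "R = max (exp (\<omega> + 2)) (\<bar>energy 1\<bar> + 1)"
  have rho_le: "rho x \<le> R" if "x > 0" for x
    unfolding R_def using kin_eq[OF that] kin_nonneg[of x]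
    by (intro le_of_log_potential_ge) linarith
  have kin_le: "kin x \<le> \<bar>energy 1\<bar> + \<bar>\<omega> + 1\<bar> * R + 1" if "x > 0" for x
  proof -
    have "log_potential \<omega> (rho x) \<le> \<bar>\<omega> + 1\<bar> * rho x + 1"
      by (rule log_potential_le[OF rho_nonneg])
    also have "\<dots> \<le> \<bar>\<omega> + 1\<bar> * R + 1"
      using rho_le[OF that] by (simp add: mult_left_mono)
    finally show ?thesis using kin_eq[OF that] by linarith
  qed
  show ?thesis
  proof (rule that[of "max R (\<bar>energy 1\<bar> + \<bar>\<omega> + 1\<bar> * R + 1)"])
    show "rho x \<le> max R (\<bar>energy 1\<bar> + \<bar>\<omega> + 1\<bar> * R + 1)" if "x > 0" for x
      using rho_le[OF that] by linarith
    show "kin x \<le> max R (\<bar>energy 1\<bar> + \<bar>\<omega> + 1\<bar> * R + 1)" if "x > 0" for x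
      using kin_le[OF that] by linarith
  qed
qed

lemma rho_mult_a': "rho x * a' x = a x * rho' x / 2 - b x * mom x"
  by (simp add: rho_def rho'_def mom_def power2_eq_square algebra_simps)

lemma rho_mult_b': "rho x * b' x = b x * rho' x / 2 + a x * mom x"
  by (simp add: rho_def rho'_def mom_def power2_eq_square algebra_simps)

end

locale log_nls_decaying = log_nls_ode +
  assumes square_integrable: "set_integrable lborel {0<..} (\<lambda>x. a x ^ 2 + b x ^ 2)"
begin

lemma rho_tendsto_0: "(rho \<longlongrightarrow> 0) at_top"
proof -
  obtain B where B: "\<And>x. x > 0 \<Longrightarrow> rho x \<le> B" "\<And>x. x > 0 \<Longrightarrow> kin x \<le> B"
    using rho_kin_bounded by blast
  show ?thesis
  proof (rule integrable_deriv_lower_bound_tendsto_0[where f' = rho' and K = "2 * B" and a = 0])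
    show "- (2 * B) \<le> rho' x" if "x > 0" for x
      using abs_rho'_le[of x] B[OF that] by linarith
    show "set_integrable lborel {0<..} rho"
      using square_integrable by (simp add: rho_def[abs_def])
  qed (auto intro: rho_deriv rho_nonneg)
qed

text \<open>\<open>\<rho>'\<close> is bounded, while its derivative tends to \<open>2 E\<close>.\<close>
lemma energy_eq_0: "energy 1 = 0"
proof -
  obtain B where B: "\<And>x. x > 0 \<Longrightarrow> rho x \<le> B" "\<And>x. x > 0 \<Longrightarrow> kin x \<le> B"
    using rho_kin_bounded by blast
  define rho'' where "rho'' x = 2 * kin x + 2 * (\<omega> - ln (rho x)) * rho x" for x
  have "((\<lambda>x. 2 * energy 1 + 2 * log_potential \<omega> (rho x) + 2 * \<omega> * rho x - 2 * (rho x * ln (rho x)))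
      \<longlongrightarrow> 2 * energy 1 + 2 * 0 + 2 * \<omega> * 0 - 2 * 0) at_top"
    using rho_tendsto_0 rho_nonneg
    by (intro tendsto_intros tendsto_log_potential_0 tendsto_mult_ln_0) auto
  moreover have "\<forall>\<^sub>F x in at_top. 2 * energy 1 + 2 * log_potential \<omega> (rho x) + 2 * \<omega> * rho x
      - 2 * (rho x * ln (rho x)) = rho'' x"
    using eventually_gt_at_top[of 0]
    by eventually_elim (simp add: rho''_def kin_eq algebra_simps)
  ultimately have "(rho'' \<longlongrightarrow> 2 * energy 1) at_top"
    by (simp add: tendsto_cong)
  moreover have "\<bar>rho' x\<bar> \<le> 2 * B" if "x > 0" for x
    using abs_rho'_le[of x] B[OF that] by linarith
  moreover have "(rho' has_real_derivative rho'' x) (at x)" if "x > 0" for x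
    unfolding rho''_def using that by (rule rho'_deriv)
  ultimately have "2 * energy 1 = 0"
    by (intro bounded_deriv_tendsto_imp_0[where f = rho' and f' = rho'' and a = 0])
  then show ?thesis by simp
qed

lemma mom_eq_0: "mom 1 = 0"
proof -
  obtain B where "\<And>x. x > 0 \<Longrightarrow> rho x \<le> B" and B: "\<And>x. x > 0 \<Longrightarrow> kin x \<le> B"
    using rho_kin_bounded by blast
  have "mom 1 ^ 2 \<le> B * rho x" if "x > 0" for x
  proof -
    have "mom x ^ 2 \<le> rho x * kin x"
      using mom_sq_add_rho'_sq[of x] zero_le_power2[of "rho' x / 2"] by linarith
    then have "mom 1 ^ 2 \<le> rho x * kin x"
      using mom_conserved[OF that] by simp
    also have "\<dots> \<le> rho x * B" using B[OF that] rho_nonneg[of x] by (rule mult_left_mono)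
    finally show ?thesis by (simp add: mult.commute)
  qed
  then have "mom 1 ^ 2 \<le> B * 0"
    by (intro tendsto_lowerbound[OF tendsto_mult[OF tendsto_const rho_tendsto_0]]
      eventually_at_top_linorderI[of 1]) auto
  then show ?thesis by simp
qed

lemma kin_eq_log_potential: "x > 0 \<Longrightarrow> kin x = log_potential \<omega> (rho x)"
  using kin_eq energy_eq_0 by simp

lemma rho'_sq: "x > 0 \<Longrightarrow> rho' x ^ 2 = 4 * rho x * kin x"
  using mom_sq_add_rho'_sq[of x] mom_conserved[of x] mom_eq_0 by (simp add: power_divide)

lemma rho'_div_rho_deriv:
  assumes "x > 0" "rho x > 0"
  shows "((\<lambda>y. rho' y / rho y) has_real_derivative -2) (at x)"
proof -
  have "rho' x * rho' x = 4 * rho x * ((\<omega> + 1) * rho x - rho x * ln (rho x))"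
    using rho'_sq[OF assms(1)] kin_eq_log_potential[OF assms(1)]
    by (simp add: log_potential_def power2_eq_square)
  then show ?thesis
    using DERIV_divide[OF rho'_deriv[OF assms(1)] rho_deriv[OF assms(1)]] assms(2)
      kin_eq_log_potential[OF assms(1)]
    by (simp add: log_potential_def power2_eq_square algebra_simps)
qed

lemma log_rho_parabola:
  assumes "convex I" "I \<subseteq> {0<..}" "\<And>x. x \<in> I \<Longrightarrow> rho x > 0"
  shows "\<exists>\<alpha> \<beta>. \<forall>x\<in>I. rho' x / rho x = \<alpha> - 2 * x \<and> ln (rho x) = \<beta> + \<alpha> * x - x^2"
proof -
  have "\<exists>\<alpha>. \<forall>x\<in>I. rho' x / rho x + 2 * x = \<alpha>"
  proof (rule has_field_derivative_zero_constant[OF assms(1)])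
    fix x assume "x \<in> I"
    with assms have "((\<lambda>y. rho' y / rho y + 2 * y) has_real_derivative -2 + 2) (at x)"
      by (intro DERIV_add rho'_div_rho_deriv) (auto intro!: derivative_eq_intros)
    then show "((\<lambda>y. rho' y / rho y + 2 * y) has_real_derivative 0) (at x within I)"
      by (simp add: has_field_derivative_at_within)
  qed
  then obtain \<alpha> where \<alpha>: "\<And>x. x \<in> I \<Longrightarrow> rho' x / rho x + 2 * x = \<alpha>" by blast
  have "\<exists>\<beta>. \<forall>x\<in>I. ln (rho x) + x^2 - \<alpha> * x = \<beta>"
  proof (rule has_field_derivative_zero_constant[OF assms(1)])
    fix x assume "x \<in> I"
    then have "x > 0" "rho x > 0" using assms by auto
    have "((\<lambda>y. ln (rho y) + y^2 - \<alpha> * y) has_real_derivative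
        inverse (rho x) * rho' x + 2 * x - \<alpha>) (at x)"
      by (rule derivative_eq_intros rho_deriv \<open>x > 0\<close> \<open>rho x > 0\<close> refl)+
        (simp add: divide_inverse)
    moreover have "inverse (rho x) * rho' x + 2 * x - \<alpha> = 0"
      using \<alpha>[OF \<open>x \<in> I\<close>] by (simp add: field_simps)
    ultimately show "((\<lambda>y. ln (rho y) + y^2 - \<alpha> * y) has_real_derivative 0) (at x within I)"
      by (simp add: has_field_derivative_at_within)
  qed
  then obtain \<beta> where "\<And>x. x \<in> I \<Longrightarrow> ln (rho x) + x^2 - \<alpha> * x = \<beta>" by blast
  with \<alpha> show ?thesis by (intro exI[of _ \<alpha>] exI[of _ \<beta>]) (fastforce simp: algebra_simps)
qed

text \<open>Between a point where \<open>\<rho> > 0\<close> and its nearest zero, \<open>\<rho>\<close> would be the exponential of a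
  parabola, which extends continuously to the zero with a positive value.\<close>
lemma rho_pos:
  assumes "x0 > 0" "rho x0 > 0" "x > 0"
  shows "rho x > 0"
proof (rule ccontr)
  assume "\<not> rho x > 0"
  then have "rho x = 0" using rho_nonneg[of x] by simp
  have pos_segment: "closed_segment x0 y \<subseteq> {0<..}" if "y > 0" for y
    using assms(1) that by (intro closed_segment_subset) auto
  have cont: "continuous_on S rho" if "S \<subseteq> {0<..}" for S
    using that by (intro continuous_at_imp_continuous_on ballI DERIV_isCont[OF rho_deriv]) auto
  obtain z where z: "z \<in> closed_segment x0 x" "rho z = 0"
    and nonzero: "\<And>y. y \<in> open_segment x0 z \<Longrightarrow> rho y \<noteq> 0"
    using exists_nearest_zero[OF cont[OF pos_segment[OF assms(3)]] \<open>rho x = 0\<close>] by blast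
  have "z > 0" using z(1) pos_segment[OF assms(3)] by auto
  have "z \<noteq> x0" using z(2) assms(2) by auto
  have I: "open_segment x0 z \<subseteq> {0<..}"
    using pos_segment[OF \<open>z > 0\<close>] open_closed_segment by blast
  then obtain \<alpha> \<beta> where parabola: "\<And>y. y \<in> open_segment x0 z \<Longrightarrow> ln (rho y) = \<beta> + \<alpha> * y - y^2"
    using log_rho_parabola[of "open_segment x0 z"] nonzero rho_nonneg
    by (metis convex_open_segment order_less_le)
  have "rho y - exp (\<beta> + \<alpha> * y - y^2) = 0" if "y \<in> closure (open_segment x0 z)" for y
  proof (rule continuous_constant_on_closure[OF _ _ that])
    show "continuous_on (closure (open_segment x0 z)) (\<lambda>y. rho y - exp (\<beta> + \<alpha> * y - y^2))"
      using pos_segment[OF \<open>z > 0\<close>] \<open>z \<noteq> x0\<close>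
      by (intro continuous_intros cont) auto
    show "rho y - exp (\<beta> + \<alpha> * y - y^2) = 0" if "y \<in> open_segment x0 z" for y
    proof -
      have "rho y > 0" using nonzero[OF that] rho_nonneg[of y] by (simp add: less_le)
      then show ?thesis using exp_ln[of "rho y"] parabola[OF that] by simp
    qed
  qed
  from this[of z] \<open>z \<noteq> x0\<close> z(2) show False by simp
qed

lemma rho_eq_exp_parabola:
  assumes "\<And>x. x > 0 \<Longrightarrow> rho x > 0"
  obtains c where "\<And>x. x > 0 \<Longrightarrow> rho' x = - 2 * (x + c) * rho x"
    and "\<And>x. x > 0 \<Longrightarrow> rho x = exp (\<omega> + 1 - (x + c)^2)"
proof -
  obtain \<alpha> \<beta> where parabola:
    "\<And>x. x > 0 \<Longrightarrow> rho' x / rho x = \<alpha> - 2 * x \<and> ln (rho x) = \<beta> + \<alpha> * x - x^2"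
    using log_rho_parabola[of "{0<..}"] assms by auto
  have "(rho' 1 / rho 1)^2 = 4 * (\<omega> + 1 - ln (rho 1))"
    using rho'_sq[of 1] kin_eq_log_potential[of 1] assms[of 1]
    by (simp add: log_potential_def power_divide power2_eq_square field_simps)
  then have "\<beta> = \<omega> + 1 - \<alpha>^2 / 4"
    using parabola[of 1] by (simp add: power2_eq_square algebra_simps)
  show ?thesis
  proof (rule that[of "- \<alpha> / 2"])
    show "rho' x = - 2 * (x + - \<alpha> / 2) * rho x" if "x > 0" for x
      using parabola[OF that] assms[OF that] by (simp add: field_simps)
    show "rho x = exp (\<omega> + 1 - (x + - \<alpha> / 2)^2)" if "x > 0" for x
    proof -
      have "ln (rho x) = \<omega> + 1 - (x + - \<alpha> / 2)^2"
        using parabola[OF that] \<open>\<beta> = _\<close> by (simp add: power2_eq_square algebra_simps)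
      then show ?thesis using assms[OF that] by (metis exp_ln)
    qed
  qed
qed

lemma gaussian:
  assumes "x0 > 0" "rho x0 > 0"
  obtains A B c where "A^2 + B^2 = exp (\<omega> + 1)"
    and "\<And>x. x > 0 \<Longrightarrow> a x = A * exp (- (1/2) * (x + c)^2)"
    and "\<And>x. x > 0 \<Longrightarrow> b x = B * exp (- (1/2) * (x + c)^2)"
proof -
  have pos: "rho x > 0" if "x > 0" for x using rho_pos[OF assms that] .
  obtain c where rho': "\<And>x. x > 0 \<Longrightarrow> rho' x = - 2 * (x + c) * rho x"
    and rho: "\<And>x. x > 0 \<Longrightarrow> rho x = exp (\<omega> + 1 - (x + c)^2)"
    using rho_eq_exp_parabola pos by blast
  have "a' x = - (x + c) * a x \<and> b' x = - (x + c) * b x" if "x > 0" for x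
  proof -
    have "mom x = 0" using mom_conserved[OF that] mom_eq_0 by simp
    then have "rho x * a' x = rho x * (- (x + c) * a x)"
      "rho x * b' x = rho x * (- (x + c) * b x)"
      using rho_mult_a'[of x, unfolded rho'[OF that]] rho_mult_b'[of x, unfolded rho'[OF that]]
      by (simp_all add: field_simps)
    then show ?thesis using pos[OF that] by simp
  qed
  moreover have "\<exists>A. \<forall>x\<in>{0<..}. f x = A * exp (- (1/2) * (x + c)^2)"
    if f_deriv: "\<And>x. x > 0 \<Longrightarrow> (f has_real_derivative f' x) (at x)"
      and f'_eq: "\<And>x. x > 0 \<Longrightarrow> f' x = - (x + c) * f x" for f f'
  proof (rule exp_solution_of_linear_ode[where \<phi>' = "\<lambda>x. - (x + c)"])
    show "(f has_real_derivative - (x + c) * f x) (at x)" if "x \<in> {0<..}" for x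
      using f_deriv[of x] f'_eq[of x] that by simp
    show "((\<lambda>x. - (1/2) * (x + c)^2) has_real_derivative - (x + c)) (at x)" for x
      by (auto intro!: derivative_eq_intros simp: field_simps)
  qed simp
  ultimately obtain A B where A: "\<And>x. x > 0 \<Longrightarrow> a x = A * exp (- (1/2) * (x + c)^2)"
    and B: "\<And>x. x > 0 \<Longrightarrow> b x = B * exp (- (1/2) * (x + c)^2)"
    using a_deriv b_deriv by (metis greaterThan_iff)
  have "(A^2 + B^2) * exp (- ((1 + c)^2)) = rho 1"
    by (simp add: rho_def A B power_mult_distrib exp_double[symmetric] algebra_simps)
  also have "\<dots> = exp (\<omega> + 1) * exp (- ((1 + c)^2))"
    by (simp add: rho flip: exp_add)
  finally have "A^2 + B^2 = exp (\<omega> + 1)" by simp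
  then show ?thesis using A B by (rule that)
qed

end

lemma log_nls_decaying_Re_Im:
  fixes \<omega> :: real and u :: "real \<Rightarrow> complex"
  defines "u' \<equiv> \<lambda>t. vector_derivative u (at t)"
  assumes "W_pos u"
    and "C2_on {0<..} u"
    and "\<forall>x>0. - vector_derivative u' (at x)
               + complex_of_real \<omega> * u x - u x * complex_of_real (ln ((cmod (u x))\<^sup>2)) = 0"
  shows "log_nls_decaying \<omega> (\<lambda>t. Re (u t)) (\<lambda>t. Im (u t)) (\<lambda>t. Re (u' t)) (\<lambda>t. Im (u' t))"
proof
  fix x :: real assume "x > 0"
  have u_deriv: "(u has_vector_derivative u' x) (at x)"
    and u'_deriv: "(u' has_vector_derivative
       complex_of_real (\<omega> - ln ((Re (u x))^2 + (Im (u x))^2)) * u x) (at x)"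
    using assms(3,4) \<open>x > 0\<close>
    by (auto simp: C2_on_def u'_def vector_derivative_works[symmetric] cmod_power2 algebra_simps)
  show "((\<lambda>t. Re (u t)) has_real_derivative Re (u' x)) (at x)"
    "((\<lambda>t. Im (u t)) has_real_derivative Im (u' x)) (at x)"
    using u_deriv by (rule has_field_derivative_Re has_field_derivative_Im)+
  show "((\<lambda>t. Re (u' t)) has_real_derivative (\<omega> - ln ((Re (u x))^2 + (Im (u x))^2)) * Re (u x)) (at x)"
    "((\<lambda>t. Im (u' t)) has_real_derivative (\<omega> - ln ((Re (u x))^2 + (Im (u x))^2)) * Im (u x)) (at x)"
    using has_field_derivative_Re[OF u'_deriv] has_field_derivative_Im[OF u'_deriv] by simp_all
next
  show "set_integrable lborel {0<..} (\<lambda>x. (Re (u x))^2 + (Im (u x))^2)"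
    using assms(2) by (simp add: W_pos_def H1_pos_def L2_pos_def cmod_power2)
qed

theorem lemma4p2:
  fixes \<omega> :: real and u :: "real \<Rightarrow> complex"
  assumes "W_pos u"
    and "C2_on {0<..} u"
    and "\<forall>x>0. - vector_derivative (\<lambda>s. vector_derivative u (at s)) (at x)
               + complex_of_real \<omega> * u x - u x * complex_of_real (ln ((cmod (u x))\<^sup>2)) = 0"
    and "\<exists>x>0. u x \<noteq> 0"
  shows "\<exists>\<theta> c :: real. \<forall>x>0.
           u x = exp (\<i> * complex_of_real \<theta>) * complex_of_real (exp ((\<omega> + 1) / 2))
                 * complex_of_real (exp (- (1/2) * (x + c)\<^sup>2))"
proof -
  interpret sol: log_nls_decaying \<omega> "\<lambda>t. Re (u t)" "\<lambda>t. Im (u t)"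
    "\<lambda>t. Re (vector_derivative u (at t))" "\<lambda>t. Im (vector_derivative u (at t))"
    using log_nls_decaying_Re_Im[OF assms(1-3)] .
  obtain x0 where x0: "x0 > 0" "sol.rho x0 > 0"
    using assms(4) by (auto simp: sol.rho_def complex_eq_iff sum_power2_gt_zero_iff)
  obtain A B c where AB: "A^2 + B^2 = exp (\<omega> + 1)"
    and Re_u: "\<And>x. x > 0 \<Longrightarrow> Re (u x) = A * exp (- (1/2) * (x + c)^2)"
    and Im_u: "\<And>x. x > 0 \<Longrightarrow> Im (u x) = B * exp (- (1/2) * (x + c)^2)"
    using sol.gaussian[OF x0] by blast
  have "exp (\<omega> + 1) = exp ((\<omega> + 1) / 2) ^ 2"
    by (simp add: power2_eq_square flip: exp_add)
  then have "cmod (Complex A B) = exp ((\<omega> + 1) / 2)"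
    using AB by (simp add: cmod_def)
  then have "Complex A B = exp (\<i> * Arg (Complex A B)) * exp ((\<omega> + 1) / 2)"
    using rcis_cmod_Arg[of "Complex A B"] by (simp add: rcis_def cis_conv_exp mult.commute)
  then show ?thesis
    using Re_u Im_u by (intro exI[of _ "Arg (Complex A B)"] exI[of _ c]) (simp add: complex_eq_iff)
qed

end
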